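(* For every positive integer $n$, $$S_n=2\sum_{k=1}^n\binom{n-1}{k-1}\binom{2k}{k}\binom{2n-2k}{n-k}.$$
   Context: $(S_n)_{n\ge0}$ is the integer sequence defined by $S_0=1$, $S_1=4$ and $(n+1)^2S_{n+1}=4(3n^2+3n+1)S_n-32n^2S_{n-1}$ for $n\ge1$; it is known that $S_n=\sum_{k=0}^n\binom nk\binom{2k}k\binom{2n-2k}{n-k}$ for all $n\ge0$. *)

theory Defs
  imports Complex_Main
begin

text \<open>The sequence S defined by S 0 = 1, S 1 = 4 and
  (n+1)^2 S(n+1) = 4(3n^2+3n+1) S n - 32 n^2 S(n-1) for n >= 1,
  written with the index shifted (n := m+1), values taken in the rationals.\<close>
fun S :: "nat \<Rightarrow> rat" where
  "S 0 = 1"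
| "S (Suc 0) = 4"
| "S (Suc (Suc m)) =
     (4 * (3 * (of_nat m + 1)^2 + 3 * (of_nat m + 1) + 1) * S (Suc m)
      - 32 * (of_nat m + 1)^2 * S m) / (of_nat m + 2)^2"

end

theory Submission
  imports Defs
begin

text \<open>Write \<open>F n k = C(n,k) C(2k,k) C(2n-2k,n-k)\<close>, so that the claimed identity reads
  \<open>S n = \<Sum>k. F n k\<close> up to a symmetry argument: splitting \<open>C(n,k) = C(n-1,k-1) + C(n-1,k)\<close>
  and reflecting \<open>k \<mapsto> n - k\<close> shows that both halves of \<open>\<Sum>k. F n k\<close> agree.
  That \<open>\<Sum>k. F n k\<close> satisfies the recurrence of \<open>S\<close> is proved by creative telescoping:
  applying the recurrence operator to \<open>F n k\<close> gives \<open>G n k - G n (k - 1)\<close> for an explicit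
  rational multiple \<open>G\<close> of \<open>F\<close>, and the sum over \<open>k\<close> telescopes to zero. The telescoping
  identity reduces to a rational-function identity by means of two contiguity relations
  of \<open>F\<close>, both valid for all \<open>n\<close> and \<open>k\<close>.\<close>

lemma Suc_times_central_binomial:
  "Suc k * (2 * Suc k choose Suc k) = 2 * (2 * k + 1) * (2 * k choose k)"
proof -
  have "2 * Suc k = Suc (2 * k + 1)" by simp
  then have "Suc k * (2 * Suc k choose Suc k) = 2 * (Suc k * (2 * k + 1 choose k))"
    using Suc_times_binomial[of k "2 * k + 1"] by (metis mult.assoc mult.left_commute)
  also have "Suc k * (2 * k + 1 choose k) = (2 * k + 1) * (2 * k choose k)"
    using binomial_absorb_comp[of "2 * k + 1" k] by (simp add: Suc_diff_le)
  finally show ?thesis by (simp only: mult.assoc)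
qed

definition summand :: "nat \<Rightarrow> nat \<Rightarrow> rat" where
  "summand n k = of_nat ((n choose k) * (2 * k choose k) * (2 * n - 2 * k choose (n - k)))"

lemma summand_eq_0: "n < k \<Longrightarrow> summand n k = 0"
  by (simp add: summand_def)

lemma summand_Suc_Suc:
  "(of_nat k + 1)^2 * summand (Suc n) (Suc k) = 2 * (of_nat n + 1) * (2 * of_nat k + 1) * summand n k"
proof -
  define c where "c = 2 * n - 2 * k choose (n - k)"
  define X where "X = (Suc n choose Suc k) * (2 * Suc k choose Suc k) * c"
  define Y where "Y = (n choose k) * (2 * k choose k) * c"
  have "Suc k ^ 2 * X = (Suc k * (Suc n choose Suc k)) * (Suc k * (2 * Suc k choose Suc k)) * c"
    unfolding X_def power2_eq_square by (simp only: mult_ac)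
  also have "\<dots> = 2 * Suc n * (2 * k + 1) * Y"
    unfolding Y_def Suc_times_binomial Suc_times_central_binomial by (simp only: mult_ac)
  finally have "of_nat (Suc k ^ 2 * X) = (of_nat (2 * Suc n * (2 * k + 1) * Y) :: rat)"
    by (rule arg_cong)
  moreover have "summand (Suc n) (Suc k) = of_nat X" "summand n k = of_nat Y"
    unfolding summand_def X_def Y_def c_def by simp_all
  ultimately show ?thesis
    by (simp add: algebra_simps)
qed

lemma summand_Suc_left:
  "(of_nat n + 1 - of_nat k)^2 * summand (Suc n) k
     = 2 * (of_nat n + 1) * (2 * of_nat n - 2 * of_nat k + 1) * summand n k"
proof (cases "k \<le> n")
  case True
  define j where "j = n - k"
  define a where "a = 2 * k choose k"
  define X where "X = (Suc n choose k) * a * (2 * Suc j choose Suc j)"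
  define Y where "Y = (n choose k) * a * (2 * j choose j)"
  have Suc_j: "Suc n - k = Suc j"
    using True by (simp add: j_def Suc_diff_le)
  have "Suc j ^ 2 * X = ((Suc n - k) * (Suc n choose k)) * a * (Suc j * (2 * Suc j choose Suc j))"
    unfolding X_def power2_eq_square Suc_j by (simp only: mult_ac)
  also have "\<dots> = 2 * Suc n * (2 * j + 1) * Y"
    unfolding Y_def binomial_absorb_comp Suc_times_central_binomial by (simp only: diff_Suc_1 mult_ac)
  finally have "of_nat (Suc j ^ 2 * X) = (of_nat (2 * Suc n * (2 * j + 1) * Y) :: rat)"
    by (rule arg_cong)
  moreover have "summand (Suc n) k = of_nat X" "summand n k = of_nat Y"
    unfolding summand_def X_def Y_def a_def using True by (simp_all add: j_def Suc_diff_le diff_mult_distrib2)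
  moreover have "(of_nat j :: rat) = of_nat n - of_nat k"
    using True by (simp add: j_def of_nat_diff)
  ultimately show ?thesis
    by (simp add: algebra_simps)
next
  case False
  then have "summand n k = 0" by (simp add: summand_eq_0)
  moreover have "k = Suc n \<or> Suc n < k"
    using False by linarith
  ultimately show ?thesis by (auto simp: summand_eq_0)
qed

lemma odd_of_nat_diff_neq_0:
  "2 * of_nat a - 2 * of_nat b + 1 \<noteq> (0 :: 'a :: ring_char_0)"
proof
  assume "2 * of_nat a - 2 * of_nat b + 1 = (0 :: 'a)"
  then have "of_int (2 * int a - 2 * int b + 1) = (of_int 0 :: 'a)" by simp
  then have "2 * int a - 2 * int b + 1 = 0" by (simp only: of_int_eq_iff)
  then show False by presburger
qed

definition summand_recurrence :: "nat \<Rightarrow> nat \<Rightarrow> rat" where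
  "summand_recurrence n k = (of_nat n + 1)^2 * summand (Suc n) k
     - 4 * (3 * of_nat n^2 + 3 * of_nat n + 1) * summand n k + 32 * of_nat n^2 * summand (n - 1) k"

text \<open>Zeilberger's certificate; its denominator is odd, hence never zero.\<close>

definition certificate :: "nat \<Rightarrow> nat \<Rightarrow> rat" where
  "certificate n k = (2 + 4 * of_nat k + 2 * of_nat n + 8 * of_nat n * of_nat k
       + 8 * of_nat n * of_nat k^2 - 4 * of_nat n^2 - 8 * of_nat n^2 * of_nat k)
     * summand n k / (2 * of_nat n - 2 * of_nat k - 1)"

lemma summand_recurrence_0:
  assumes "n \<ge> 1"
  shows "summand_recurrence n 0 = certificate n 0"
proof -
  obtain m where n: "n = Suc m" using assms by (cases n) auto
  define N where "N = (of_nat n :: rat)"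
  define B where "B = summand (Suc n) 0"
  have N: "N \<ge> 1" using assms by (simp add: N_def)
  have "(N + 1)^2 * B = 2 * (N + 1) * (2 * N + 1) * summand n 0"
    using summand_Suc_left[of n 0] by (simp add: N_def B_def)
  then have s1: "summand n 0 = (N + 1)^2 * B / (2 * (N + 1) * (2 * N + 1))"
    using N by (simp add: nonzero_eq_divide_eq mult.commute)
  have "N^2 * summand n 0 = 2 * N * (2 * N - 1) * summand m 0"
    using summand_Suc_left[of m 0] by (simp add: N_def n algebra_simps)
  then have s2: "summand m 0 = N^2 * summand n 0 / (2 * N * (2 * N - 1))"
    using N by (simp add: nonzero_eq_divide_eq mult.commute)
  have "n - 1 = m" by (simp add: n)
  then have recurrence: "summand_recurrence n 0
      = (N + 1)^2 * B - 4 * (3 * N^2 + 3 * N + 1) * summand n 0 + 32 * N^2 * summand m 0"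
    unfolding summand_recurrence_def N_def B_def by (simp only:)
  have cert: "certificate n 0 = (2 + 2 * N - 4 * N^2) * summand n 0 / (2 * N - 1)"
    unfolding certificate_def N_def by simp
  have nz: "N \<noteq> 0" "2 * N + 2 \<noteq> 0" "2 * N \<noteq> 1" "2 * N + 1 \<noteq> 0"
    using N by auto
  have "(N + 1)^2 * B - 4 * (3 * N^2 + 3 * N + 1) * summand n 0 + 32 * N^2 * summand m 0
      = (2 + 2 * N - 4 * N^2) * summand n 0 / (2 * N - 1)"
    unfolding s2 s1 by (simp add: nz divide_simps) algebra
  then show ?thesis
    unfolding recurrence cert .
qed

lemma summand_recurrence_Suc:
  assumes "n \<ge> 1"
  shows "summand_recurrence n (Suc k) = certificate n (Suc k) - certificate n k"
proof -
  obtain m where n: "n = Suc m" using assms by (cases n) auto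
  define N where "N = (of_nat n :: rat)"
  define K where "K = (of_nat k :: rat)"
  define B where "B = summand (Suc n) (Suc k)"
  have N: "N \<ge> 1" and K: "K \<ge> 0" using assms by (simp_all add: N_def K_def)
  have odd: "2 * N - 2 * K - 1 \<noteq> 0" "2 * N - 2 * K - 3 \<noteq> 0"
    using odd_of_nat_diff_neq_0[of n "Suc k", where 'a = rat]
      odd_of_nat_diff_neq_0[of n "Suc (Suc k)", where 'a = rat]
    by (simp_all add: N_def K_def algebra_simps)
  have "(K + 1)^2 * B = 2 * (N + 1) * (2 * K + 1) * summand n k"
    using summand_Suc_Suc[of k n] by (simp add: N_def K_def B_def)
  then have s0: "summand n k = (K + 1)^2 * B / (2 * (N + 1) * (2 * K + 1))"
    using N K by (simp add: nonzero_eq_divide_eq mult.commute)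
  have "(N - K)^2 * B = 2 * (N + 1) * (2 * N - 2 * K - 1) * summand n (Suc k)"
    using summand_Suc_left[of n "Suc k"] by (simp add: N_def K_def B_def algebra_simps)
  then have s1: "summand n (Suc k) = (N - K)^2 * B / (2 * (N + 1) * (2 * N - 2 * K - 1))"
    using N odd by (simp add: nonzero_eq_divide_eq mult.commute)
  have "(N - K - 1)^2 * summand n (Suc k) = 2 * N * (2 * N - 2 * K - 3) * summand m (Suc k)"
    using summand_Suc_left[of m "Suc k"] by (simp add: N_def K_def n algebra_simps)
  then have s2: "summand m (Suc k) = (N - K - 1)^2 * summand n (Suc k) / (2 * N * (2 * N - 2 * K - 3))"
    using N odd by (simp add: nonzero_eq_divide_eq mult.commute)
  have "n - 1 = m" by (simp add: n)
  then have recurrence: "summand_recurrence n (Suc k)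
      = (N + 1)^2 * B - 4 * (3 * N^2 + 3 * N + 1) * summand n (Suc k) + 32 * N^2 * summand m (Suc k)"
    unfolding summand_recurrence_def N_def B_def by (simp only:)
  have cert: "certificate n (Suc k) - certificate n k
      = (2 + 4 * (K + 1) + 2 * N + 8 * N * (K + 1) + 8 * N * (K + 1)^2 - 4 * N^2 - 8 * N^2 * (K + 1))
          * summand n (Suc k) / (2 * N - 2 * K - 3)
        - (2 + 4 * K + 2 * N + 8 * N * K + 8 * N * K^2 - 4 * N^2 - 8 * N^2 * K)
          * summand n k / (2 * N - 2 * K - 1)"
    unfolding certificate_def N_def K_def by (simp add: add.commute algebra_simps)
  have nz: "N \<noteq> 0" "2 * N + 2 \<noteq> 0" "2 * K + 1 \<noteq> 0" "2 * N - 2 * K \<noteq> 1" "2 * N - 2 * K \<noteq> 3"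
    using N K odd by auto
  have "(N + 1)^2 * B - 4 * (3 * N^2 + 3 * N + 1) * summand n (Suc k) + 32 * N^2 * summand m (Suc k)
      = (2 + 4 * (K + 1) + 2 * N + 8 * N * (K + 1) + 8 * N * (K + 1)^2 - 4 * N^2 - 8 * N^2 * (K + 1))
          * summand n (Suc k) / (2 * N - 2 * K - 3)
        - (2 + 4 * K + 2 * N + 8 * N * K + 8 * N * K^2 - 4 * N^2 - 8 * N^2 * K)
          * summand n k / (2 * N - 2 * K - 1)"
    unfolding s2 s1 s0 by (simp add: nz divide_simps) algebra
  then show ?thesis
    unfolding recurrence cert .
qed

lemma sum_summand_recurrence:
  assumes "n \<ge> 1"
  shows "(\<Sum>k\<le>M. summand_recurrence n k) = certificate n M"
proof (induction M)
  case 0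
  show ?case using summand_recurrence_0[OF assms] by simp
next
  case (Suc M)
  then show ?case using summand_recurrence_Suc[OF assms, of M] by simp
qed

lemma sum_summand_atMost_ge:
  assumes "n \<le> M"
  shows "(\<Sum>k\<le>M. summand n k) = (\<Sum>k\<le>n. summand n k)"
  using assms by (intro sum.mono_neutral_right) (auto simp: summand_eq_0)

lemma sum_summand_recurrence_eq_0:
  assumes "n \<ge> 1"
  shows "(of_nat n + 1)^2 * (\<Sum>k\<le>Suc n. summand (Suc n) k)
      - 4 * (3 * of_nat n^2 + 3 * of_nat n + 1) * (\<Sum>k\<le>n. summand n k)
      + 32 * of_nat n^2 * (\<Sum>k\<le>n - 1. summand (n - 1) k) = 0"
proof -
  have "(\<Sum>k\<le>Suc n. summand_recurrence n k) = certificate n (Suc n)"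
    by (rule sum_summand_recurrence[OF assms])
  also have "\<dots> = 0"
    by (simp add: certificate_def summand_eq_0)
  moreover have "(\<Sum>k\<le>Suc n. summand n k) = (\<Sum>k\<le>n. summand n k)"
    "(\<Sum>k\<le>Suc n. summand (n - 1) k) = (\<Sum>k\<le>n - 1. summand (n - 1) k)"
    by (rule sum_summand_atMost_ge, simp)+
  ultimately show ?thesis
    unfolding summand_recurrence_def sum.distrib sum_subtractf sum_distrib_left[symmetric]
    by simp
qed

lemma S_eq_sum_summand: "S n = (\<Sum>k\<le>n. summand n k)"
proof (induction n rule: S.induct)
  case 1
  show ?case by (simp add: summand_def)
next
  case 2
  show ?case by (simp add: summand_def)
next
  case (3 m)
  define x where "x = (of_nat m :: rat)"
  have "(x + 2)^2 * (\<Sum>k\<le>Suc (Suc m). summand (Suc (Suc m)) k)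
      - 4 * (3 * (x + 1)^2 + 3 * (x + 1) + 1) * (\<Sum>k\<le>Suc m. summand (Suc m) k)
      + 32 * (x + 1)^2 * (\<Sum>k\<le>m. summand m k) = 0"
    using sum_summand_recurrence_eq_0[of "Suc m"] by (simp add: x_def add_ac)
  moreover have "x + 2 \<noteq> 0" by (simp add: x_def)
  ultimately show ?case
    using 3 by (simp add: x_def[symmetric] field_simps)
qed

lemma sum_choose_Suc_symmetric:
  fixes f :: "nat \<Rightarrow> 'a :: comm_semiring_1"
  assumes symmetric: "\<And>k. k \<le> Suc m \<Longrightarrow> f (Suc m - k) = f k"
  shows "(\<Sum>k\<le>Suc m. of_nat (Suc m choose k) * f k)
       = 2 * (\<Sum>k = 1..Suc m. of_nat (m choose (k - 1)) * f k)"
proof -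
  define lower where "lower = (\<Sum>k\<le>m. of_nat (m choose k) * f (Suc k))"
  have "(\<Sum>k\<le>m. of_nat (m choose k) * f k) = (\<Sum>k\<le>Suc m. of_nat (m choose k) * f k)"
    by (simp add: binomial_eq_0)
  also have "\<dots> = f 0 + (\<Sum>k\<le>m. of_nat (m choose Suc k) * f (Suc k))"
    by (simp only: sum.atMost_Suc_shift) simp
  finally have lower_shift: "f 0 + (\<Sum>k\<le>m. of_nat (m choose Suc k) * f (Suc k))
      = (\<Sum>k\<le>m. of_nat (m choose k) * f k)" ..
  have "(\<Sum>k\<le>Suc m. of_nat (Suc m choose k) * f k)
      = f 0 + (\<Sum>k\<le>m. of_nat (Suc m choose Suc k) * f (Suc k))"
    by (simp only: sum.atMost_Suc_shift) simp
  also have "\<dots> = (f 0 + (\<Sum>k\<le>m. of_nat (m choose Suc k) * f (Suc k))) + lower"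
    unfolding lower_def by (simp add: sum.distrib algebra_simps)
  finally have pascal: "(\<Sum>k\<le>Suc m. of_nat (Suc m choose k) * f k)
      = (\<Sum>k\<le>m. of_nat (m choose k) * f k) + lower"
    unfolding lower_shift .
  have "(\<Sum>k\<le>m. of_nat (m choose k) * f k) = (\<Sum>k\<le>m. of_nat (m choose (m - k)) * f (m - k))"
    using sum.atLeastAtMost_rev[of "\<lambda>k. of_nat (m choose k) * f k" 0 m] by (simp add: atLeast0AtMost)
  also have "\<dots> = lower"
    unfolding lower_def
  proof (intro sum.cong refl)
    fix k assume "k \<in> {..m}"
    then have "k \<le> m" by simp
    then show "of_nat (m choose (m - k)) * f (m - k) = of_nat (m choose k) * f (Suc k)"
      using symmetric[of "Suc k"] by (simp add: binomial_symmetric[symmetric])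
  qed
  finally have reflected: "(\<Sum>k\<le>m. of_nat (m choose k) * f k) = lower" .
  have "(\<Sum>k = 1..Suc m. of_nat (m choose (k - 1)) * f k) = lower"
    unfolding lower_def One_nat_def sum.shift_bounds_cl_Suc_ivl by (simp add: atLeast0AtMost)
  then show ?thesis
    using pascal reflected by (simp add: mult_2)
qed

theorem lemma2p7:
  fixes n :: nat
  assumes "n \<ge> 1"
  shows "S n = 2 * (\<Sum>k = 1..n. of_nat ((n - 1 choose (k - 1)) * (2 * k choose k)
                                   * (2 * n - 2 * k choose (n - k))))"
proof -
  obtain m where n: "n = Suc m" using assms by (cases n) auto
  define f where "f k = (of_nat ((2 * k choose k) * (2 * n - 2 * k choose (n - k))) :: rat)" for k
  have "f (Suc m - k) = f k" if "k \<le> Suc m" for k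
    using that unfolding f_def n by (simp add: diff_mult_distrib2 mult.commute)
  then have "(\<Sum>k\<le>Suc m. of_nat (Suc m choose k) * f k)
      = 2 * (\<Sum>k = 1..Suc m. of_nat (m choose (k - 1)) * f k)"
    by (rule sum_choose_Suc_symmetric)
  then show ?thesis
    unfolding S_eq_sum_summand summand_def f_def n by (simp add: mult.assoc)
qed

end
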